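(* Let $k\geq2$ and let $W\subseteq\mathbb{Z}_{3k}$, $\overline W=\mathbb{Z}_{3k}\setminus W$, satisfy: for every $i\in\mathbb{Z}_{3k}$, $|x^i\cap W|\geq2$ and $|C^i\cap\overline W|\geq2$; and for every $i\in\overline W$, $[i+2k,i+2k+\omega(i)]_{3k}\subseteq W$. Then $p^i\not\equiv0\pmod 3$ for every $i\in\overline W$.
   Context: $\mathbb{Z}_{3k}=\{0,\dots,3k-1\}$ with addition modulo $3k$; $[a,b]_{3k}$ is the cyclic closed interval from $a$ to $b$. $C^i=\{i,\dots,i+k-1\}$ (mod $3k$), $x^i=\{i,i+k,i+2k\}$. For $i\in\overline W$, $\omega(i)=\min\{t\ge0:i+k+t\in\overline W\}$. For $i\in\overline W$ the sequence $(r^i_t)_{t\ge0}\subseteq\mathbb{Z}_{3k}$ is defined by $r^i_0=i$ and $r^i_t=r^i_{t-1}+k+\omega(r^i_{t-1})$ for $t\ge1$ (all terms lie in $\overline W$), and $p^i=\max\{t\geq0:\sum_{j=0}^{t-1}\omega(r^i_j)\leq k-1\}$. *)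

theory Defs
  imports Main
begin

text \<open>Z_{3k} is represented by {0..<3k} :: nat set, with addition modulo 3k.\<close>

definition Zn :: "nat \<Rightarrow> nat set" where
  "Zn k = {0..<3*k}"

definition Wbar :: "nat \<Rightarrow> nat set \<Rightarrow> nat set" where
  "Wbar k W = Zn k - W"

definition cint :: "nat \<Rightarrow> nat \<Rightarrow> nat \<Rightarrow> nat set" where
  "cint n a b = {(a + j) mod n | j. j \<le> (b mod n + n - a mod n) mod n}"

definition Cblock :: "nat \<Rightarrow> nat \<Rightarrow> nat set" where
  "Cblock k i = {(i + j) mod (3*k) | j. j < k}"

definition xtrip :: "nat \<Rightarrow> nat \<Rightarrow> nat set" where
  "xtrip k i = {i mod (3*k), (i + k) mod (3*k), (i + 2*k) mod (3*k)}"

definition omega :: "nat \<Rightarrow> nat set \<Rightarrow> nat \<Rightarrow> nat" where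
  "omega k W i = (LEAST t. (i + k + t) mod (3*k) \<in> Wbar k W)"

fun rseq :: "nat \<Rightarrow> nat set \<Rightarrow> nat \<Rightarrow> nat \<Rightarrow> nat" where
  "rseq k W i 0 = i"
| "rseq k W i (Suc t) = (rseq k W i t + k + omega k W (rseq k W i t)) mod (3*k)"

definition pnum :: "nat \<Rightarrow> nat set \<Rightarrow> nat \<Rightarrow> nat" where
  "pnum k W i = (GREATEST t. (\<Sum>j<t. omega k W (rseq k W i j)) \<le> k - 1)"

end

theory Submission
  imports Defs
begin

text \<open>
  Every step of the sequence \<open>r\<^sup>i\<close> advances by \<open>k + \<omega> \<ge> k + 1\<close>: if \<open>\<omega>(r) = 0\<close>, the triple
  \<open>x\<^sup>r\<close> would contain the two non-members \<open>r, r + k\<close> of \<open>W\<close> and hence at most one member.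
  So after \<open>p = 3m\<close> steps the accumulated shift is \<open>3mk + S\<close> with \<open>S = \<Sum>\<^sub>j\<^sub><\<^sub>p \<omega>(r\<^sub>j) \<le> k - 1\<close>,
  i.e. \<open>r\<^sub>p = i + S\<close>, while \<open>S + \<omega>(r\<^sub>p) \<ge> k\<close> by maximality of \<open>p\<close>. Then the interval
  \<open>[r\<^sub>p + 2k, r\<^sub>p + 2k + \<omega>(r\<^sub>p)]\<close>, which lies in \<open>W\<close>, contains \<open>r\<^sub>p + 2k + (k - S) = i + 3k \<equiv> i\<close>,
  although \<open>i \<notin> W\<close>.
\<close>

lemma omega_le:
  assumes "(i + k + t) mod (3*k) \<in> Wbar k W"
  shows "omega k W i \<le> t"
  unfolding omega_def using assms by (rule Least_le)

lemma omega_hits_Wbar: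
  assumes "(i + k + t) mod (3*k) \<in> Wbar k W"
  shows "(i + k + omega k W i) mod (3*k) \<in> Wbar k W"
  unfolding omega_def using assms by (rule LeastI)

lemma omega_bounds:
  assumes "k \<ge> 1" and "a \<in> Wbar k W"
  shows "(i + k + omega k W i) mod (3*k) \<in> Wbar k W" and "omega k W i < 3*k"
proof -
  define t where "t = (3*k - (i + k) mod (3*k) + a) mod (3*k)"
  have a_lt: "a < 3*k" using assms(2) by (simp add: Wbar_def Zn_def)
  have "(i + k) mod (3*k) < 3*k" using assms(1) by simp
  then have "(i + k) mod (3*k) + (3*k - (i + k) mod (3*k) + a) = a + 3*k" by simp
  then have "(i + k + t) mod (3*k) = (a + 3*k) mod (3*k)"
    unfolding t_def by (metis mod_add_left_eq mod_add_right_eq)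
  also have "\<dots> = a" using a_lt by simp
  finally have t_hit: "(i + k + t) mod (3*k) \<in> Wbar k W" using assms(2) by simp
  then show "(i + k + omega k W i) mod (3*k) \<in> Wbar k W" by (rule omega_hits_Wbar)
  have "t < 3*k" unfolding t_def using assms(1) by simp
  with omega_le[OF t_hit] show "omega k W i < 3*k" by simp
qed

lemma rseq_in_Wbar:
  assumes "k \<ge> 1" and "i \<in> Wbar k W"
  shows "rseq k W i t \<in> Wbar k W"
  by (induction t) (use assms omega_bounds(1)[OF assms] in auto)

lemma omega_pos:
  assumes "k \<ge> 1" and triples: "\<forall>i \<in> Zn k. card (xtrip k i \<inter> W) \<ge> 2"
    and r: "r \<in> Wbar k W"
  shows "omega k W r \<ge> 1"
proof (rule ccontr)
  assume "\<not> omega k W r \<ge> 1"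
  then have "omega k W r = 0" by simp
  then have "(r + k) mod (3*k) \<in> Wbar k W"
    using omega_bounds(1)[OF assms(1) r, of r] by simp
  moreover have "r \<in> Zn k" and "r < 3*k" and "r \<notin> W" using r by (auto simp: Wbar_def Zn_def)
  ultimately have "xtrip k r \<inter> W \<subseteq> {(r + 2*k) mod (3*k)}" and "card (xtrip k r \<inter> W) \<ge> 2"
    using triples by (auto simp: xtrip_def Wbar_def)
  then show False using card_mono[of "{(r + 2*k) mod (3*k)}" "xtrip k r \<inter> W"] by simp
qed

lemma rseq_closed_form:
  assumes "i < 3*k"
  shows "rseq k W i t = (i + t*k + (\<Sum>j<t. omega k W (rseq k W i j))) mod (3*k)"
proof (induction t)
  case 0
  then show ?case using assms by simp
next
  case (Suc t)
  let ?S = "\<Sum>j<t. omega k W (rseq k W i j)" and ?w = "omega k W (rseq k W i t)"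
  have "rseq k W i (Suc t) = ((i + t*k + ?S) mod (3*k) + k + ?w) mod (3*k)"
    using Suc by simp
  also have "\<dots> = (i + t*k + ?S + k + ?w) mod (3*k)"
    by (metis mod_add_left_eq)
  also have "\<dots> = (i + Suc t * k + (\<Sum>j<Suc t. omega k W (rseq k W i j))) mod (3*k)"
    by (simp add: algebra_simps)
  finally show ?case .
qed

lemma rseq_mult_3:
  assumes "i < 3*k"
  shows "rseq k W i (3*m) = (i + (\<Sum>j<3*m. omega k W (rseq k W i j))) mod (3*k)"
proof -
  have "rseq k W i (3*m) = (i + (\<Sum>j<3*m. omega k W (rseq k W i j)) + m*(3*k)) mod (3*k)"
    using rseq_closed_form[OF assms, of W "3*m"] by (simp add: ac_simps)
  then show ?thesis by (simp only: mod_mult_self1)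
qed

lemma Greatest_partial_sum_le:
  fixes f :: "nat \<Rightarrow> nat" and c :: nat
  assumes pos: "\<And>j. f j \<ge> 1"
  defines "p \<equiv> GREATEST t. (\<Sum>j<t. f j) \<le> c"
  shows "(\<Sum>j<p. f j) \<le> c" and "c < (\<Sum>j<Suc p. f j)"
proof -
  have sum_ge: "t \<le> (\<Sum>j<t. f j)" for t
    using sum_mono[of "{..<t}" "\<lambda>_. 1" f] pos by simp
  have bound: "t \<le> c" if "(\<Sum>j<t. f j) \<le> c" for t
    using sum_ge[of t] that by linarith
  \<comment> \<open>\<open>P\<close> is given explicitly: higher-order unification against \<open>?P (Greatest ?P)\<close> diverges.\<close>
  show "(\<Sum>j<p. f j) \<le> c" unfolding p_def
    by (rule GreatestI_nat[where P = "\<lambda>t. (\<Sum>j<t. f j) \<le> c" and k = 0 and b = c])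
      (simp, blast intro: bound)
  show "c < (\<Sum>j<Suc p. f j)"
  proof (rule ccontr)
    assume "\<not> ?thesis"
    then have "Suc p \<le> p" unfolding p_def
      by (intro Greatest_le_nat[where P = "\<lambda>t. (\<Sum>j<t. f j) \<le> c" and b = c])
        (simp, blast intro: bound)
    then show False by simp
  qed
qed

lemma mem_cint:
  assumes "j \<le> d" and "d < n"
  shows "(a + j) mod n \<in> cint n a (a + d)"
proof -
  have diff: "((x + d) mod n + n - x) mod n = d" if "x < n" for x
  proof (cases "x + d < n")
    case False
    then have "(x + d) mod n = x + d - n" using that assms(2) by (simp add: le_mod_geq)
    then show ?thesis using that assms(2) False by simp
  qed (use that assms(2) in simp)
  have "((a + d) mod n + n - a mod n) mod n = d"
    using diff[of "a mod n"] assms(2) by (simp add: mod_add_left_eq)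
  then show ?thesis
    unfolding cint_def using assms(1) by (metis (mono_tags, lifting) mem_Collect_eq)
qed

lemma mem_cint_wrap:
  assumes "i < 3*k" and "S < k" and "k - S \<le> w" and "w < 3*k"
  shows "i \<in> cint (3*k) ((i + S) mod (3*k) + 2*k) ((i + S) mod (3*k) + 2*k + w)"
proof -
  have "((i + S) mod (3*k) + 2*k + (k - S)) mod (3*k) = (i + S + 2*k + (k - S)) mod (3*k)"
    by (metis mod_add_left_eq)
  also have "i + S + 2*k + (k - S) = i + 3*k" using assms(2) by simp
  also have "(i + 3*k) mod (3*k) = i" using assms(1) by simp
  finally show ?thesis using mem_cint[OF assms(3,4)] by metis
qed

theorem mainTheorem9:
  fixes k :: nat and W :: "nat set"
  assumes "k \<ge> 2"
    and "W \<subseteq> Zn k"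
    and "\<forall>i \<in> Zn k. card (xtrip k i \<inter> W) \<ge> 2"
    and "\<forall>i \<in> Zn k. card (Cblock k i \<inter> Wbar k W) \<ge> 2"
    and "\<forall>i \<in> Wbar k W. cint (3*k) (i + 2*k) (i + 2*k + omega k W i) \<subseteq> W"
  shows "\<forall>i \<in> Wbar k W. \<not> (3 dvd pnum k W i)"
proof (intro ballI notI)
  fix i assume i: "i \<in> Wbar k W" and "3 dvd pnum k W i"
  then obtain m where p: "pnum k W i = 3*m" by blast
  have k1: "k \<ge> 1" and i_lt: "i < 3*k" using assms(1) i by (auto simp: Wbar_def Zn_def)
  let ?r = "rseq k W i (3*m)" and ?S = "\<Sum>j<3*m. omega k W (rseq k W i j)"
  have r: "?r \<in> Wbar k W" by (rule rseq_in_Wbar[OF k1 i])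
  have pos: "omega k W (rseq k W i j) \<ge> 1" for j
    by (rule omega_pos[OF k1 assms(3) rseq_in_Wbar[OF k1 i]])
  have "?S \<le> k - 1" and "k - 1 < ?S + omega k W ?r"
    using Greatest_partial_sum_le[where f = "\<lambda>j. omega k W (rseq k W i j)" and c = "k - 1"] pos p
    by (simp_all add: pnum_def)
  then have "i \<in> cint (3*k) (?r + 2*k) (?r + 2*k + omega k W ?r)"
    unfolding rseq_mult_3[OF i_lt]
    by (intro mem_cint_wrap[OF i_lt]) (use k1 omega_bounds(2)[OF k1 i] in auto)
  moreover have "cint (3*k) (?r + 2*k) (?r + 2*k + omega k W ?r) \<subseteq> W"
    using assms(5) r by blast
  ultimately show False using i by (auto simp: Wbar_def)
qed

end
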